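(* Let $\alpha>0$, $A\ge0$, $B>0$, $t>0$, and let $P_n(x,t)$ be the monic polynomials orthogonal on $[0,\infty)$ w.r.t. $w(x,t)=x^\alpha e^{-x}(A+B\theta(x-t))$, with norms $h_n(t)$ and recurrence $zP_n=P_{n+1}+\alpha_nP_n+\beta_nP_{n-1}$, $\beta_n=h_n/h_{n-1}$. Let $R_n(t)=Bt^\alpha e^{-t}\{P_n(t,t)\}^2/h_n(t)$ and $r_n(t)=Bt^\alpha e^{-t}P_n(t,t)P_{n-1}(t,t)/h_{n-1}(t)$. Then for fixed $t$ and $n\ge1$: $$r_n^2=\beta_nR_nR_{n-1},$$ $$(n+r_n)(n+\alpha+r_n)=\beta_n(1-R_n)(1-R_{n-1}),$$ $$\sum_{j=0}^{n-1}R_j+r_n\left[1-\frac{\alpha}{t}-\frac{2(n+r_n)}{t}\right]=\frac{\beta_n}{t}\left[(1-R_n)R_{n-1}+(1-R_{n-1})R_n\right].$$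
   Context: $\theta$ is the Heaviside function ($1$ for $x>0$, $0$ otherwise); $P_n(t,t)$ is $P_n(x,t)$ at $x=t$. *)

theory Defs
  imports "HOL-Analysis.Analysis" "HOL-Computational_Algebra.Polynomial"
begin

definition heaviside :: "real \<Rightarrow> real" where
  "heaviside x = (if x > 0 then 1 else 0)"

definition jw :: "real \<Rightarrow> real \<Rightarrow> real \<Rightarrow> real \<Rightarrow> real \<Rightarrow> real" where
  "jw \<alpha> A B t x = x powr \<alpha> * exp (- x) * (A + B * heaviside (x - t))"

definition monic_OP :: "(real \<Rightarrow> real) \<Rightarrow> (nat \<Rightarrow> real poly) \<Rightarrow> bool" where
  "monic_OP w P \<longleftrightarrow>
     (\<forall>n. degree (P n) = n \<and> lead_coeff (P n) = 1) \<and>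
     (\<forall>m n. m \<noteq> n \<longrightarrow>
        (\<integral>x\<in>{0..}. poly (P m) x * poly (P n) x * w x \<partial>lborel) = 0)"

definition hnorm :: "(real \<Rightarrow> real) \<Rightarrow> (nat \<Rightarrow> real poly) \<Rightarrow> nat \<Rightarrow> real" where
  "hnorm w P n = (\<integral>x\<in>{0..}. (poly (P n) x)\<^sup>2 * w x \<partial>lborel)"

end

theory Submission
  imports Defs "HOL-Real_Asymp.Real_Asymp"
begin

text \<open>
  The weight x^\<alpha> e^-x (A + B \<theta>(x - t)) satisfies a Pearson-type identity: integrating
  (x^(\<alpha>+1) e^-x f)' against A + B \<theta>(x - t) over [0,\<infinity>) only picks up the jump at t, so
  L((\<alpha>+1) f + x f' - x f) = -B t^\<alpha> e^-t t f(t) for the moment functional L and every polynomial f.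
  With f = P_n^2 this gives \<alpha>_n = 2n + 1 + \<alpha> + t R_n; computing \<langle>P_n, x P_(n+1)'\<rangle> once with
  f = P_(n+1) P_n and once from the differentiated three-term recurrence gives
  \<beta>_n - t r_n = \<Sum>_(j<n) \<alpha>_j. Evaluating the recurrence at x = t yields recursions for r_(n+1)
  and \<beta>_(n+1) R_(n+1), from which \<beta>_n (1 - R_n - R_(n-1)) = n(n + \<alpha>) + (2n + \<alpha>) r_n follows by
  induction. With r_n^2 = \<beta>_n R_n R_(n-1), the three identities are algebraic consequences.
\<close>

section \<open>Orthogonal polynomials of a positive definite functional\<close>

locale positive_definite_functional =
  fixes L :: "real poly \<Rightarrow> real"
  assumes L_add: "L (p + q) = L p + L q"
    and L_smult: "L (smult c p) = c * L p"
    and L_square_pos: "q \<noteq> 0 \<Longrightarrow> L (q * q) > 0"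
begin

definition ip :: "real poly \<Rightarrow> real poly \<Rightarrow> real" where
  "ip p q = L (p * q)"

lemma L_diff: "L (p - q) = L p - L q"
  using L_add[of "p - q" q] by simp

lemma ip_add_left: "ip (p + q) s = ip p s + ip q s"
  and ip_add_right: "ip s (p + q) = ip s p + ip s q"
  and ip_diff_left: "ip (p - q) s = ip p s - ip q s"
  and ip_diff_right: "ip s (p - q) = ip s p - ip s q"
  and ip_smult_left: "ip (smult c p) s = c * ip p s"
  and ip_smult_right: "ip s (smult c p) = c * ip s p"
  unfolding ip_def by (simp_all add: algebra_simps L_add L_diff L_smult)

lemmas ip_linear = ip_add_left ip_add_right ip_diff_left ip_diff_right ip_smult_left ip_smult_right

lemma ip_commute: "ip p q = ip q p"
  unfolding ip_def by (simp add: mult.commute)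

lemma ip_0_left [simp]: "ip 0 q = 0" and ip_0_right [simp]: "ip q 0 = 0"
  using ip_smult_left[of 0 0 q] ip_smult_right[of q 0 0] by simp_all

lemma ip_pCons_0: "ip (pCons 0 p) q = ip p (pCons 0 q)"
  unfolding ip_def by (metis mult_pCons_left mult_pCons_right smult_0_left)

lemma ip_self_pos: "q \<noteq> 0 \<Longrightarrow> ip q q > 0"
  unfolding ip_def by (rule L_square_pos)

end

locale monic_orthogonal_polynomials = positive_definite_functional +
  fixes P :: "nat \<Rightarrow> real poly"
  assumes degree_P: "degree (P n) = n"
    and lead_coeff_P: "lead_coeff (P n) = 1"
    and orthogonal_P: "m \<noteq> n \<Longrightarrow> L (P m * P n) = 0"
begin

definition h :: "nat \<Rightarrow> real" where
  "h n = ip (P n) (P n)"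

definition a :: "nat \<Rightarrow> real" where
  "a n = ip (pCons 0 (P n)) (P n) / h n"

definition b :: "nat \<Rightarrow> real" where
  "b n = (if n = 0 then 0 else h n / h (n - 1))"

lemma ip_P_P: "m \<noteq> n \<Longrightarrow> ip (P m) (P n) = 0"
  unfolding ip_def by (rule orthogonal_P)

lemma h_pos: "h n > 0"
proof -
  have "P n \<noteq> 0" using lead_coeff_P[of n] by auto
  thus ?thesis unfolding h_def by (rule ip_self_pos)
qed

lemma ip_eq_0_if_orthogonal_to_P:
  assumes "\<And>j. j < N \<Longrightarrow> ip s (P j) = 0" "degree p < N"
  shows "ip s p = 0"
  using assms(2)
proof (induction "degree p" arbitrary: p rule: less_induct)
  case less
  show ?case
  proof (cases "p = 0")
    case False
    define d where "d = degree p"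
    define q where "q = p - smult (lead_coeff p) (P d)"
    have "q = 0 \<or> degree q < d"
      by (rule eq_zero_or_degree_less)
        (auto simp: q_def d_def degree_P lead_coeff_P[of "degree p", simplified degree_P] intro: degree_diff_le)
    hence "ip s q = 0"
      using less unfolding d_def by auto
    moreover have "ip s (P d) = 0"
      using less.prems assms(1) unfolding d_def by auto
    moreover have "p = q + smult (lead_coeff p) (P d)"
      unfolding q_def by simp
    ultimately show ?thesis by (metis ip_add_right ip_smult_right add_0 mult_zero_right)
  qed simp
qed

lemma ip_P_eq_coeff:
  assumes "degree q \<le> n"
  shows "ip (P n) q = coeff q n * h n"
proof -
  define q' where "q' = q - smult (coeff q n) (P n)"
  have "q' = 0 \<or> degree q' < n"
    by (rule eq_zero_or_degree_less)
      (use assms lead_coeff_P[of n] in \<open>auto simp: q'_def degree_P intro: degree_diff_le\<close>)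
  hence "ip (P n) q' = 0"
    using ip_eq_0_if_orthogonal_to_P[of n "P n" q'] ip_P_P by auto
  thus ?thesis by (simp add: q'_def ip_linear h_def)
qed

lemma ip_P_lower_degree: "degree q < n \<Longrightarrow> ip (P n) q = 0"
  using ip_P_eq_coeff[of q n] by (simp add: coeff_eq_0)

lemma degree_pCons_0_pderiv_le: "degree (pCons 0 (pderiv p)) \<le> degree (p :: real poly)"
  by (cases "degree p") (auto simp: degree_pderiv pderiv_eq_0_iff)

lemma ip_P_pCons_0_pderiv_P: "ip (P n) (pCons 0 (pderiv (P n))) = real n * h n"
proof -
  have "degree (pCons 0 (pderiv (P n))) \<le> n"
    using degree_pCons_0_pderiv_le[of "P n"] by (simp add: degree_P)
  moreover have "coeff (pCons 0 (pderiv (P n))) n = real n"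
    using lead_coeff_P[of n] degree_P[of n] by (cases n) (auto simp: coeff_pderiv)
  ultimately show ?thesis by (simp add: ip_P_eq_coeff)
qed

lemma ip_P_Suc_pCons_0_P: "ip (P (Suc n)) (pCons 0 (P n)) = h (Suc n)"
  using lead_coeff_P[of n] degree_P[of n] by (subst ip_P_eq_coeff) auto

lemma three_term_recurrence:
  "pCons 0 (P n) = P (Suc n) + smult (a n) (P n) + smult (b n) (P (n - 1))"
proof -
  define s where "s = pCons 0 (P n) - P (Suc n) - smult (a n) (P n) - smult (b n) (P (n - 1))"
  have "s = 0 \<or> degree s < Suc n"
    by (rule eq_zero_or_degree_less)
      (use degree_P[of n] degree_P[of "n - 1"] degree_P[of "Suc n"] lead_coeff_P[of n] lead_coeff_P[of "Suc n"]
        in \<open>auto simp: s_def coeff_eq_0 intro!: degree_diff_le order.trans[OF degree_smult_le] order.trans[OF degree_pCons_le]\<close>)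
  moreover have "ip s (P j) = 0" if "j < Suc n" for j
  proof -
    have expand: "ip s (P j) = ip (P n) (pCons 0 (P j)) - ip (P (Suc n)) (P j) - a n * ip (P n) (P j)
        - b n * ip (P (n - 1)) (P j)"
      unfolding s_def by (simp add: ip_linear ip_pCons_0)
    consider "j = n" | "Suc j = n" | "Suc j < n"
      using \<open>j < Suc n\<close> by linarith
    then show ?thesis
    proof cases
      case 1
      thus ?thesis using expand h_pos[of n]
        by (cases n) (auto simp: a_def b_def h_def ip_P_P ip_commute)
    next
      case 2
      thus ?thesis using expand ip_P_Suc_pCons_0_P[of j] h_pos[of j]
        by (auto simp: b_def h_def ip_P_P)
    next
      case 3
      have "degree (pCons 0 (P j)) < n"
        using 3 degree_P[of j] degree_pCons_le[of 0 "P j"] by linarith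
      thus ?thesis using expand 3 by (simp add: ip_P_lower_degree ip_P_P)
    qed
  qed
  ultimately have "ip s s = 0"
    using ip_eq_0_if_orthogonal_to_P[of "Suc n" s s] by auto
  hence "s = 0" using ip_self_pos[of s] by fastforce
  thus ?thesis unfolding s_def by (simp add: algebra_simps)
qed

lemma poly_P_Suc: "poly (P (Suc n)) x = (x - a n) * poly (P n) x - b n * poly (P (n - 1)) x"
  using arg_cong[OF three_term_recurrence[of n], of "\<lambda>p. poly p x"] by (simp add: algebra_simps)

lemma ip_P_pCons_0_pderiv_P_Suc_rec:
  "ip (P n) (pCons 0 (pderiv (P (Suc n)))) = a n * h n + b n * ip (P (n - 1)) (pCons 0 (pderiv (P n)))"
proof -
  have "P n + pCons 0 (pderiv (P n))
      = pderiv (P (Suc n)) + smult (a n) (pderiv (P n)) + smult (b n) (pderiv (P (n - 1)))"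
    using arg_cong[OF three_term_recurrence[of n], of pderiv] by (simp add: pderiv_pCons pderiv_add pderiv_smult)
  hence "ip (P n) (pCons 0 (P n)) + ip (pCons 0 (P n)) (pCons 0 (pderiv (P n)))
      = ip (P n) (pCons 0 (pderiv (P (Suc n)))) + a n * ip (P n) (pCons 0 (pderiv (P n)))
        + b n * ip (P n) (pCons 0 (pderiv (P (n - 1))))"
    unfolding ip_pCons_0 by (metis (no_types, lifting) ip_add_right ip_smult_right add_pCons smult_pCons add_0 mult_zero_right)
  moreover have "ip (P n) (pCons 0 (P n)) = a n * h n"
    using h_pos[of n] by (simp add: a_def ip_commute)
  moreover have "ip (pCons 0 (P n)) (pCons 0 (pderiv (P n)))
      = a n * ip (P n) (pCons 0 (pderiv (P n))) + b n * ip (P (n - 1)) (pCons 0 (pderiv (P n)))"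
    using ip_P_lower_degree[of "pCons 0 (pderiv (P n))" "Suc n"] degree_pCons_0_pderiv_le[of "P n"]
    by (subst three_term_recurrence) (simp add: ip_linear degree_P)
  moreover have "b n * ip (P n) (pCons 0 (pderiv (P (n - 1)))) = 0"
    using degree_pCons_0_pderiv_le[of "P (n - 1)"] by (cases n) (simp_all add: b_def degree_P ip_P_lower_degree)
  ultimately show ?thesis by simp
qed

end

text \<open>(x^(\<alpha>+1) e^-x f)' = x^\<alpha> e^-x \<cdot> pearson_poly \<alpha> f\<close>

definition pearson_poly :: "real \<Rightarrow> real poly \<Rightarrow> real poly" where
  "pearson_poly \<alpha> f = smult (\<alpha> + 1) f + pCons 0 (pderiv f) - pCons 0 f"

locale jump_laguerre_orthogonal_polynomials = monic_orthogonal_polynomials +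
  fixes \<alpha> t c :: real
  assumes L_pearson_poly: "L (pearson_poly \<alpha> f) = - (c * t * poly f t)"
begin

definition R :: "nat \<Rightarrow> real" where
  "R n = c * (poly (P n) t)\<^sup>2 / h n"

text \<open>The case n = 0 follows the convention P_(-1) = 0, as does b 0 = 0.\<close>

definition r :: "nat \<Rightarrow> real" where
  "r n = (if n = 0 then 0 else c * poly (P n) t * poly (P (n - 1)) t / h (n - 1))"

lemma ip_pearson:
  "(\<alpha> + 1) * ip p q + ip p (pCons 0 (pderiv q)) + ip q (pCons 0 (pderiv p)) - ip (pCons 0 p) q
     = - (c * t * poly p t * poly q t)"
proof -
  have "pearson_poly \<alpha> (p * q)
      = smult (\<alpha> + 1) (p * q) + p * pCons 0 (pderiv q) + q * pCons 0 (pderiv p) - pCons 0 p * q"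
    by (simp add: pearson_poly_def pderiv_mult algebra_simps)
  hence "L (pearson_poly \<alpha> (p * q))
      = (\<alpha> + 1) * ip p q + ip p (pCons 0 (pderiv q)) + ip q (pCons 0 (pderiv p)) - ip (pCons 0 p) q"
    by (simp add: ip_def L_add L_diff L_smult)
  thus ?thesis by (simp add: L_pearson_poly mult.assoc)
qed

lemma a_eq: "a n = 2 * real n + 1 + \<alpha> + t * R n"
proof -
  have "(\<alpha> + 1) * h n + 2 * (real n * h n) - a n * h n = - (c * t * (poly (P n) t)\<^sup>2)"
    using ip_pearson[of "P n" "P n"] h_pos[of n]
    by (simp add: ip_P_pCons_0_pderiv_P a_def power2_eq_square flip: h_def)
  thus ?thesis using h_pos[of n] by (simp add: R_def field_simps)
qed

lemma ip_P_pCons_0_pderiv_P_Suc: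
  "ip (P n) (pCons 0 (pderiv (P (Suc n)))) = h (Suc n) - c * t * poly (P (Suc n)) t * poly (P n) t"
  using ip_pearson[of "P (Suc n)" "P n"] degree_pCons_0_pderiv_le[of "P n"]
  by (simp add: ip_P_P ip_pCons_0 ip_P_Suc_pCons_0_P ip_P_lower_degree degree_P)

lemma b_times_ip_P_pCons_0_pderiv_P: "b n * ip (P (n - 1)) (pCons 0 (pderiv (P n))) = h n * (b n - t * r n)"
proof (cases n)
  case (Suc m)
  have "h m > 0" by (rule h_pos)
  thus ?thesis
    using Suc by (simp add: b_def r_def ip_P_pCons_0_pderiv_P_Suc field_simps)
qed (simp add: b_def r_def)

lemma b_minus_t_r_Suc: "b (Suc n) - t * r (Suc n) = b n - t * r n + a n"
proof -
  \<comment> \<open>both sides are ip (P n) (pCons 0 (pderiv (P (Suc n)))), by the Pearson identity and by the recurrence\<close>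
  have "h (Suc n) - c * t * poly (P (Suc n)) t * poly (P n) t = h n * (a n + b n - t * r n)"
    using ip_P_pCons_0_pderiv_P_Suc_rec[of n] b_times_ip_P_pCons_0_pderiv_P[of n]
    by (simp add: ip_P_pCons_0_pderiv_P_Suc algebra_simps)
  moreover have "h n > 0" by (rule h_pos)
  ultimately show ?thesis
    by (simp add: b_def r_def field_simps)
qed

lemma b_minus_t_r: "b n - t * r n = real n * (real n + \<alpha>) + t * (\<Sum>j<n. R j)"
proof (induction n)
  case 0
  show ?case by (simp add: b_def r_def)
next
  case (Suc n)
  thus ?case by (simp add: b_minus_t_r_Suc a_eq algebra_simps)
qed

lemma r_Suc: "r (Suc n) = (t - a n) * R n - r n"
proof -
  have "h n > 0" "h (n - 1) > 0" by (rule h_pos)+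
  have "r (Suc n) = c * ((t - a n) * poly (P n) t - b n * poly (P (n - 1)) t) * poly (P n) t / h n"
    by (simp add: r_def poly_P_Suc)
  also have "\<dots> = (t - a n) * R n - r n"
    using \<open>h n > 0\<close> \<open>h (n - 1) > 0\<close>
    by (cases n) (simp_all add: R_def r_def b_def field_simps power2_eq_square)
  finally show ?thesis .
qed

lemma b_R_Suc: "b (Suc n) * R (Suc n) = (t - a n)\<^sup>2 * R n - 2 * (t - a n) * r n + b n * R (n - 1)"
proof -
  have "h n > 0" "h (n - 1) > 0" "h (Suc n) > 0" by (rule h_pos)+
  have "b (Suc n) * R (Suc n) = c * ((t - a n) * poly (P n) t - b n * poly (P (n - 1)) t)\<^sup>2 / h n"
    using \<open>h (Suc n) > 0\<close> by (simp add: b_def R_def poly_P_Suc)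
  also have "\<dots> = (t - a n)\<^sup>2 * R n - 2 * (t - a n) * r n + b n * R (n - 1)"
    using \<open>h n > 0\<close> \<open>h (n - 1) > 0\<close>
    by (cases n) (simp_all add: R_def r_def b_def field_simps power2_eq_square)
  finally show ?thesis .
qed

lemma r_squared: "(r n)\<^sup>2 = b n * R n * R (n - 1)"
  using h_pos[of n] h_pos[of "n - 1"]
  by (simp add: r_def R_def b_def field_simps power2_eq_square)

lemma b_R_invariant: "b n * (1 - R n - R (n - 1)) = real n * (real n + \<alpha>) + (2 * real n + \<alpha>) * r n"
proof (induction n)
  case 0
  show ?case by (simp add: b_def r_def)
next
  case (Suc n)
  have "b (Suc n) * (1 - R (Suc n) - R n)
      = (real n + 1) * (real n + 1 + \<alpha>) + (2 * (real n + 1) + \<alpha>) * r (Suc n)"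
    using Suc.IH a_eq[of n] r_Suc[of n] b_R_Suc[of n] b_minus_t_r_Suc[of n] by algebra
  thus ?case by (simp add: algebra_simps)
qed

lemma n_plus_r_product: "(real n + r n) * (real n + \<alpha> + r n) = b n * (1 - R n) * (1 - R (n - 1))"
  using r_squared[of n] b_R_invariant[of n] by algebra

lemma sum_R_identity:
  "t * (\<Sum>j<n. R j) + r n * (t - \<alpha> - 2 * (real n + r n))
     = b n * ((1 - R n) * R (n - 1) + (1 - R (n - 1)) * R n)"
  using r_squared[of n] b_R_invariant[of n] b_minus_t_r[of n] by algebra

end


section \<open>The Laguerre weight with a jump\<close>

lemma powr_exp_poly_eq_sum:
  fixes x s :: real
  assumes "x \<ge> 0"
  shows "x powr s * exp (- x) * poly f x = (\<Sum>i\<le>degree f. coeff f i * (x powr (s + real i) * exp (- x)))"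
proof (cases "x = 0")
  case False
  with assms show ?thesis
    by (simp add: poly_altdef sum_distrib_left sum_distrib_right powr_add powr_realpow mult_ac)
qed simp

lemma set_integrable_powr_exp:
  fixes s :: real
  assumes "s > -1"
  shows "set_integrable lborel {0..} (\<lambda>x::real. x powr s * exp (- x))"
proof -
  have "(\<lambda>x. x powr s / exp x) integrable_on {0..}"
    using has_integral_integrable[OF Gamma_integral_real[of "s + 1"]] assms by simp
  hence "(\<lambda>x::real. x powr s * exp (- x)) absolutely_integrable_on {0..}"
    by (intro nonnegative_absolutely_integrable_1) (simp_all add: exp_minus divide_inverse)
  thus ?thesis
    unfolding set_integrable_def by (subst (asm) integrable_completion) auto
qed

lemma set_integrable_powr_exp_poly:
  fixes \<alpha> :: real
  assumes "\<alpha> > -1"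
  shows "set_integrable lborel {0..} (\<lambda>x. x powr \<alpha> * exp (- x) * poly f x)"
proof -
  have "integrable lborel (\<lambda>x. indicator {0..} x *\<^sub>R (x powr (\<alpha> + real i) * exp (- x)))" for i
    using set_integrable_powr_exp[of "\<alpha> + real i"] assms by (simp add: set_integrable_def)
  hence "integrable lborel (\<lambda>x. \<Sum>i\<le>degree f. coeff f i *\<^sub>R (indicator {0..} x *\<^sub>R (x powr (\<alpha> + real i) * exp (- x))))"
    by simp
  moreover have "indicator {0..} x *\<^sub>R (x powr \<alpha> * exp (- x) * poly f x)
      = (\<Sum>i\<le>degree f. coeff f i *\<^sub>R (indicator {0..} x *\<^sub>R (x powr (\<alpha> + real i) * exp (- x))))" for x :: real
    by (cases "x \<ge> 0") (simp_all add: powr_exp_poly_eq_sum sum_distrib_left)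
  ultimately show ?thesis
    unfolding set_integrable_def by simp
qed

lemma set_integrable_powr_exp_poly_Ioi:
  fixes \<alpha> s :: real
  assumes "\<alpha> > -1" "s \<ge> 0"
  shows "set_integrable lborel {s<..} (\<lambda>x. x powr \<alpha> * exp (- x) * poly f x)"
proof -
  have "{s<..} \<subseteq> {0::real..}" using assms(2) by auto
  from set_integrable_subset[OF set_integrable_powr_exp_poly[OF assms(1)] _ this] show ?thesis by simp
qed

lemma tendsto_powr_exp_poly_at_top:
  "((\<lambda>x::real. x powr s * exp (- x) * poly f x) \<longlongrightarrow> 0) at_top"
proof -
  have "((\<lambda>x. \<Sum>i\<le>degree f. coeff f i * (x powr (s + real i) * exp (- x))) \<longlongrightarrow> (\<Sum>i\<le>degree f. coeff f i * 0)) at_top"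
    by (intro tendsto_sum tendsto_mult tendsto_const) real_asymp
  moreover have "eventually (\<lambda>x. (\<Sum>i\<le>degree f. coeff f i * (x powr (s + real i) * exp (- x)))
      = x powr s * exp (- x) * poly f x) at_top"
    using eventually_ge_at_top[of 0] by eventually_elim (simp add: powr_exp_poly_eq_sum)
  ultimately show ?thesis by (simp add: tendsto_cong)
qed

lemma has_real_derivative_powr_exp_poly:
  assumes "x > 0"
  shows "((\<lambda>x. x powr (\<alpha> + 1) * exp (- x) * poly f x) has_real_derivative
           x powr \<alpha> * exp (- x) * poly (pearson_poly \<alpha> f) x) (at x)"
proof -
  have "((\<lambda>x. x powr (\<alpha> + 1) * exp (- x) * poly f x) has_real_derivative
      ((\<alpha> + 1) * x powr (\<alpha> + 1 - 1) * exp (- x) + x powr (\<alpha> + 1) * (exp (- x) * (- 1))) * poly f x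
        + x powr (\<alpha> + 1) * exp (- x) * poly (pderiv f) x) (at x)"
    by (intro derivative_eq_intros has_real_derivative_powr assms poly_DERIV) auto
  thus ?thesis
    using assms by (simp add: pearson_poly_def powr_add algebra_simps)
qed

lemma isCont_powr_exp_poly:
  fixes x \<alpha> :: real
  assumes "x > 0"
  shows "isCont (\<lambda>x. x powr \<alpha> * exp (- x) * poly f x) x"
  by (intro continuous_intros) (use assms in auto)

lemma integral_tail_pearson_poly:
  fixes \<alpha> s :: real
  assumes "\<alpha> > -1" "s \<ge> 0"
  shows "(LINT x:{s<..}|lborel. x powr \<alpha> * exp (- x) * poly (pearson_poly \<alpha> f) x)
           = - (s powr (\<alpha> + 1) * exp (- s) * poly f s)"
proof -
  let ?G = "\<lambda>x. x powr (\<alpha> + 1) * exp (- x) * poly f x"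
  have "(?G \<longlongrightarrow> ?G s) (at_right s)"
  proof (cases "s = 0")
    case True
    have "((\<lambda>x. x powr (\<alpha> + 1)) \<longlongrightarrow> 0) (at_right 0)"
      by (rule tendsto_zero_powrI)
        (use assms eventually_at_right_less[of 0] in \<open>auto elim: eventually_mono\<close>)
    hence "(?G \<longlongrightarrow> 0 * exp (- 0) * poly f 0) (at_right 0)"
      by (intro tendsto_intros)
    thus ?thesis using True by simp
  next
    case False
    hence "isCont ?G s" using assms by (intro continuous_intros) auto
    thus ?thesis by (simp add: isCont_def filterlim_at_split)
  qed
  moreover have "set_integrable lborel (einterval s \<infinity>) (\<lambda>x. x powr \<alpha> * exp (- x) * poly (pearson_poly \<alpha> f) x)"
    using set_integrable_powr_exp_poly_Ioi[OF assms] by simp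
  ultimately have "(LBINT x=ereal s..\<infinity>. x powr \<alpha> * exp (- x) * poly (pearson_poly \<alpha> f) x) = 0 - ?G s"
    using tendsto_powr_exp_poly_at_top[of "\<alpha> + 1" f] assms
    by (intro interval_integral_FTC_integrable)
      (auto simp: has_real_derivative_iff_has_vector_derivative[symmetric] ereal_tendsto_simps1
        intro!: has_real_derivative_powr_exp_poly isCont_powr_exp_poly)
  thus ?thesis by (simp add: interval_lebesgue_integral_def)
qed

text \<open>The integrand vanishes at 0 because 0 powr \<alpha> = 0 for every \<alpha>, even when \<alpha> \<le> 0.\<close>

lemma set_integral_powr_exp_poly_Ici_eq_Ioi:
  fixes \<alpha> :: real
  shows "(LINT x:{0..}|lborel. x powr \<alpha> * exp (- x) * poly f x) = (LINT x:{0<..}|lborel. x powr \<alpha> * exp (- x) * poly f x)"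
  unfolding set_lebesgue_integral_def
  by (intro arg_cong[where f = "integral\<^sup>L lborel"] ext) (auto simp: indicator_def)

lemma set_integral_powr_exp_square_pos:
  fixes \<alpha> s :: real
  assumes "\<alpha> > -1" "s \<ge> 0" "q \<noteq> 0"
  shows "(LINT x:{s<..}|lborel. x powr \<alpha> * exp (- x) * poly (q * q) x) > 0"
proof -
  let ?g = "\<lambda>x. indicator {s<..} x *\<^sub>R (x powr \<alpha> * exp (- x) * poly (q * q) x)"
  have "integrable lborel ?g"
    using set_integrable_powr_exp_poly_Ioi[OF assms(1,2), of "q * q"] by (simp add: set_integrable_def)
  moreover have nonneg: "?g x \<ge> 0" for x
    by (simp add: indicator_def)
  ultimately have "integral\<^sup>L lborel ?g \<ge> 0" by simp
  moreover have "integral\<^sup>L lborel ?g \<noteq> 0"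
  proof
    assume "integral\<^sup>L lborel ?g = 0"
    hence "AE x in lborel. ?g x = 0"
      using integral_nonneg_eq_0_iff_AE[OF \<open>integrable lborel ?g\<close>] nonneg by auto
    moreover have "?g x > 0" if "x \<in> {s<..} - {x. poly q x = 0}" for x
      using that assms(2) by (auto simp: indicator_def zero_less_mult_iff)
    ultimately have "AE x in lborel. x \<notin> {s<..} - {x. poly q x = 0}"
      using assms(2) by (auto elim!: eventually_mono)
    moreover have Z: "{x. poly q x = 0} \<in> null_sets lborel"
      using poly_roots_finite[OF assms(3)] by (rule finite_imp_null_set_lborel)
    ultimately have "{s<..} - {x. poly q x = 0} \<in> null_sets lborel"
      by (subst AE_iff_null_sets) auto
    with Z have "{s<..<s + 1} \<in> null_sets lborel"
      by (rule null_sets_subset[OF null_sets.Un]) auto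
    hence "emeasure lborel {s<..<s + 1} = 0" by auto
    thus False by simp
  qed
  ultimately show ?thesis
    unfolding set_lebesgue_integral_def by linarith
qed

definition jw_functional :: "real \<Rightarrow> real \<Rightarrow> real \<Rightarrow> real \<Rightarrow> real poly \<Rightarrow> real" where
  "jw_functional \<alpha> A B t p = (\<integral>x\<in>{0..}. poly p x * jw \<alpha> A B t x \<partial>lborel)"

lemma jw_functional_smult: "jw_functional \<alpha> A B t (smult c p) = c * jw_functional \<alpha> A B t p"
  unfolding jw_functional_def by (simp add: mult.assoc)

context
  fixes \<alpha> A B t :: real
  assumes \<alpha>: "\<alpha> > -1" and t: "t \<ge> 0"
begin

lemma indicator_times_poly_jw:
  "indicator {0..} x *\<^sub>R (poly p x * jw \<alpha> A B t x)
     = A * (indicator {0..} x *\<^sub>R (x powr \<alpha> * exp (- x) * poly p x))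
       + B * (indicator {t<..} x *\<^sub>R (x powr \<alpha> * exp (- x) * poly p x))"
  using t by (auto simp: jw_def heaviside_def indicator_def algebra_simps)

lemma set_integrable_poly_jw: "set_integrable lborel {0..} (\<lambda>x. poly p x * jw \<alpha> A B t x)"
  using set_integrable_powr_exp_poly[OF \<alpha>, of p] set_integrable_powr_exp_poly_Ioi[OF \<alpha> t, of p]
  unfolding set_integrable_def indicator_times_poly_jw by simp

lemma jw_functional_eq:
  "jw_functional \<alpha> A B t p
     = A * (LINT x:{0..}|lborel. x powr \<alpha> * exp (- x) * poly p x)
       + B * (LINT x:{t<..}|lborel. x powr \<alpha> * exp (- x) * poly p x)"
  using set_integrable_powr_exp_poly[OF \<alpha>, of p] set_integrable_powr_exp_poly_Ioi[OF \<alpha> t, of p]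
  unfolding jw_functional_def set_lebesgue_integral_def set_integrable_def indicator_times_poly_jw
  by simp

lemma jw_functional_add: "jw_functional \<alpha> A B t (p + q) = jw_functional \<alpha> A B t p + jw_functional \<alpha> A B t q"
  unfolding jw_functional_def by (simp add: distrib_right set_integral_add(2)[OF set_integrable_poly_jw set_integrable_poly_jw])

lemma jw_functional_square_pos:
  assumes "A \<ge> 0" "B > 0" "q \<noteq> 0"
  shows "jw_functional \<alpha> A B t (q * q) > 0"
proof -
  have "(LINT x:{0..}|lborel. x powr \<alpha> * exp (- x) * poly (q * q) x) \<ge> 0"
    unfolding set_lebesgue_integral_def by (intro Bochner_Integration.integral_nonneg) simp
  moreover have "(LINT x:{t<..}|lborel. x powr \<alpha> * exp (- x) * poly (q * q) x) > 0"
    by (rule set_integral_powr_exp_square_pos[OF \<alpha> t assms(3)])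
  ultimately show ?thesis
    using assms(1,2) by (simp add: jw_functional_eq add_nonneg_pos)
qed

lemma jw_functional_pearson_poly:
  "jw_functional \<alpha> A B t (pearson_poly \<alpha> f) = - (B * t powr \<alpha> * exp (- t) * t * poly f t)"
  using integral_tail_pearson_poly[OF \<alpha>, of 0 f] integral_tail_pearson_poly[OF \<alpha> t, of f] t
  by (simp add: jw_functional_eq set_integral_powr_exp_poly_Ici_eq_Ioi powr_add)

end

lemma jump_laguerre_orthogonal_polynomials_jw:
  assumes "\<alpha> > -1" "A \<ge> 0" "B > 0" "t \<ge> 0" "monic_OP (jw \<alpha> A B t) P"
  shows "jump_laguerre_orthogonal_polynomials (jw_functional \<alpha> A B t) P \<alpha> t (B * t powr \<alpha> * exp (- t))"
proof unfold_locales
  show "jw_functional \<alpha> A B t (p + q) = jw_functional \<alpha> A B t p + jw_functional \<alpha> A B t q" for p q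
    using assms(1,4) by (rule jw_functional_add)
  show "jw_functional \<alpha> A B t (smult c p) = c * jw_functional \<alpha> A B t p" for c p
    by (rule jw_functional_smult)
  show "q \<noteq> 0 \<Longrightarrow> jw_functional \<alpha> A B t (q * q) > 0" for q
    by (rule jw_functional_square_pos[OF assms(1,4,2,3)])
  show "degree (P n) = n" "lead_coeff (P n) = 1" for n
    using assms(5) unfolding monic_OP_def by blast+
  show "m \<noteq> n \<Longrightarrow> jw_functional \<alpha> A B t (P m * P n) = 0" for m n
    using assms(5) by (auto simp: monic_OP_def jw_functional_def)
  show "jw_functional \<alpha> A B t (pearson_poly \<alpha> f) = - (B * t powr \<alpha> * exp (- t) * t * poly f t)" for f
    using assms(1,4) by (rule jw_functional_pearson_poly)
qed

theorem lemma7: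
  fixes \<alpha> A B t :: real and P :: "nat \<Rightarrow> real poly"
    and h \<beta> R r :: "nat \<Rightarrow> real" and n :: nat
  assumes "\<alpha> > 0" "A \<ge> 0" "B > 0" "t > 0"
    and "monic_OP (jw \<alpha> A B t) P"
    and "\<And>k. h k = hnorm (jw \<alpha> A B t) P k"
    and "\<And>k. \<beta> k = h k / h (k - 1)"
    and "\<And>k. R k = B * t powr \<alpha> * exp (- t) * (poly (P k) t)\<^sup>2 / h k"
    and "\<And>k. r k = B * t powr \<alpha> * exp (- t) * poly (P k) t * poly (P (k - 1)) t / h (k - 1)"
    and "n \<ge> 1"
  shows "(r n)\<^sup>2 = \<beta> n * R n * R (n - 1) \<and>
    (real n + r n) * (real n + \<alpha> + r n) = \<beta> n * (1 - R n) * (1 - R (n - 1)) \<and>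
    (\<Sum>j<n. R j) + r n * (1 - \<alpha> / t - 2 * (real n + r n) / t)
           = \<beta> n / t * ((1 - R n) * R (n - 1) + (1 - R (n - 1)) * R n)"
proof -
  interpret J: jump_laguerre_orthogonal_polynomials "jw_functional \<alpha> A B t" P \<alpha> t "B * t powr \<alpha> * exp (- t)"
    using assms(1-5) by (intro jump_laguerre_orthogonal_polynomials_jw) auto
  have h: "h k = J.h k" for k
    using assms(6) by (simp add: hnorm_def J.h_def J.ip_def jw_functional_def power2_eq_square)
  have R: "R k = J.R k" for k
    using assms(8) by (simp add: J.R_def h)
  have r: "r n = J.r n" and \<beta>: "\<beta> n = J.b n"
    using assms(7,9,10) by (simp_all add: J.r_def J.b_def h)
  have "(\<Sum>j<n. R j) + r n * (1 - \<alpha> / t - 2 * (real n + r n) / t)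
      = (t * (\<Sum>j<n. R j) + r n * (t - \<alpha> - 2 * (real n + r n))) / t"
    using assms(4) by (simp add: field_simps)
  thus ?thesis
    using J.r_squared[of n] J.n_plus_r_product[of n] J.sum_R_identity[of n]
    unfolding R r \<beta> by simp
qed

end
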